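(* Let $G,\Gamma$ be groups, $\pi:G\to\Gamma$ a surjective morphism and $K=\ker\pi$. Let $(\tau_T)_{T>0}$ be a family of unital states on $(\mathbb{C}[K],1,* )$ such that $\tau_T(gkg^{-1})=\tau_T(k)$ for all $(g,k)\in G\times K$ and $T>0$, and such that for every $k\in K$, $$\lim_{T\to0}\tau_T(k)=1,\qquad\lim_{T\to\infty}\tau_T(k)=\tau_{reg_K}(k).$$ For $g\in G$ let $\tilde\tau_T(g)=\tau_T(g)$ if $\pi(g)=1_\Gamma$ and $0$ otherwise. Then for every $g\in G$, $$\lim_{T\to0}\tilde\tau_T(g)=\tau_{reg_\Gamma}(\pi(g)),\qquad\lim_{T\to\infty}\tilde\tau_T(g)=\tau_{reg_G}(g).$$
   Context: For a group $H$, $\mathbb{C}[H]$ is its group algebra with $h^*=h^{-1}$; a unital state is a positive, tracial, unital linear functional. The regular state $\tau_{reg_H}$ is defined by $\tau_{reg_H}(h)=1$ if $h=1_H$ and $0$ otherwise; the trivial state is $\tau_{triv_H}(h)=1$ for all $h$ (so the first limit hypothesis reads $\tau_T\to\tau_{triv_K}$ pointwise). *)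

theory Defs
  imports "HOL-Analysis.Analysis" "HOL-Algebra.Algebra"
begin

text \<open>A linear functional on the group algebra C[H] is determined by its values on
  the basis H; we represent it by a function tau on carrier H.  For a = sum_h a_h h
  (finitely supported) we have a^* a = sum_{h,k} conj(a_h) a_k h^{-1} k.\<close>

definition unital_state :: "('a, 'b) monoid_scheme \<Rightarrow> ('a \<Rightarrow> complex) \<Rightarrow> bool" where
  "unital_state H \<tau> \<longleftrightarrow>
     \<tau> \<one>\<^bsub>H\<^esub> = 1 \<and>
     (\<forall>h\<in>carrier H. \<forall>k\<in>carrier H. \<tau> (h \<otimes>\<^bsub>H\<^esub> k) = \<tau> (k \<otimes>\<^bsub>H\<^esub> h)) \<and>
     (\<forall>S a. finite S \<longrightarrow> S \<subseteq> carrier H \<longrightarrow>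
        (let s = (\<Sum>h\<in>S. \<Sum>k\<in>S. cnj (a h) * a k * \<tau> (inv\<^bsub>H\<^esub> h \<otimes>\<^bsub>H\<^esub> k))
         in s \<in> \<real> \<and> Re s \<ge> 0))"

definition reg_state :: "('a, 'b) monoid_scheme \<Rightarrow> 'a \<Rightarrow> complex" where
  "reg_state H h = (if h = \<one>\<^bsub>H\<^esub> then 1 else 0)"

end

theory Submission
  imports Defs
begin

text \<open>On the kernel the extended state is \<open>\<tau>\<^sub>T\<close> itself, so both limits are the hypotheses
  (the regular state of the kernel is the restriction of that of \<open>G\<close>). Off the kernel it
  vanishes identically, and so do both regular states, because \<open>\<pi> g \<noteq> 1\<close> forces \<open>g \<noteq> 1\<close>.\<close>

lemma reg_state_eq_0_if_hom_ne_one: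
  assumes "group_hom G H h" and "h g \<noteq> \<one>\<^bsub>H\<^esub>"
  shows "reg_state G g = 0"
proof -
  have "g \<noteq> \<one>\<^bsub>G\<^esub>"
    using assms group_hom.hom_one by fastforce
  then show ?thesis
    by (simp add: reg_state_def)
qed

theorem lemma6p2:
  fixes G :: "('a, 'b) monoid_scheme" and \<Gamma> :: "('c, 'd) monoid_scheme"
    and \<pi> :: "'a \<Rightarrow> 'c" and \<tau> :: "real \<Rightarrow> 'a \<Rightarrow> complex"
  assumes "group G" and "group \<Gamma>"
    and "\<pi> \<in> hom G \<Gamma>" and "\<pi> ` carrier G = carrier \<Gamma>"
    and "\<And>T. T > 0 \<Longrightarrow> unital_state (G\<lparr>carrier := kernel G \<Gamma> \<pi>\<rparr>) (\<tau> T)"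
    and "\<And>T g k. T > 0 \<Longrightarrow> g \<in> carrier G \<Longrightarrow> k \<in> kernel G \<Gamma> \<pi> \<Longrightarrow>
           \<tau> T (g \<otimes>\<^bsub>G\<^esub> k \<otimes>\<^bsub>G\<^esub> inv\<^bsub>G\<^esub> g) = \<tau> T k"
    and "\<And>k. k \<in> kernel G \<Gamma> \<pi> \<Longrightarrow> ((\<lambda>T. \<tau> T k) \<longlongrightarrow> 1) (at_right 0)"
    and "\<And>k. k \<in> kernel G \<Gamma> \<pi> \<Longrightarrow>
           ((\<lambda>T. \<tau> T k) \<longlongrightarrow> reg_state (G\<lparr>carrier := kernel G \<Gamma> \<pi>\<rparr>) k) at_top"
  shows "\<forall>g\<in>carrier G.
           ((\<lambda>T. if \<pi> g = \<one>\<^bsub>\<Gamma>\<^esub> then \<tau> T g else 0) \<longlongrightarrow> reg_state \<Gamma> (\<pi> g)) (at_right 0) \<and>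
           ((\<lambda>T. if \<pi> g = \<one>\<^bsub>\<Gamma>\<^esub> then \<tau> T g else 0) \<longlongrightarrow> reg_state G g) at_top"
proof
  fix g
  assume g: "g \<in> carrier G"
  have hom: "group_hom G \<Gamma> \<pi>"
    using assms(1-3) by (simp add: group_hom_def group_hom_axioms_def)
  show "((\<lambda>T. if \<pi> g = \<one>\<^bsub>\<Gamma>\<^esub> then \<tau> T g else 0) \<longlongrightarrow> reg_state \<Gamma> (\<pi> g)) (at_right 0) \<and>
        ((\<lambda>T. if \<pi> g = \<one>\<^bsub>\<Gamma>\<^esub> then \<tau> T g else 0) \<longlongrightarrow> reg_state G g) at_top"
  proof (cases "\<pi> g = \<one>\<^bsub>\<Gamma>\<^esub>")
    case True
    then have "g \<in> kernel G \<Gamma> \<pi>"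
      using g by (simp add: kernel_def)
    with True show ?thesis
      using assms(7,8) by (simp add: reg_state_def)
  next
    case False
    then show ?thesis
      using reg_state_eq_0_if_hom_ne_one[OF hom False] by (simp add: reg_state_def)
  qed
qed

end
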